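(* Let $\Phi=\forall u_1\ldots\forall u_n\exists e_1(D_1)\ldots\exists e_m(D_m).\varphi$ be a DQBF with prefix $\mathcal{Q}$, let $A$ be a set of arbiter variables, let $\psi$ be a CNF with $\mathit{var}(\psi)\subseteq U\cup E\cup A$, and let $\neg p\vee\ell$ be a forcing clause for the existential literal $\ell$ in $\psi$. Then there is no model $F$ of $\mathcal{Q}\exists A(\emptyset).\psi$ such that both (i) for every arbiter literal $a$ in $p$, the (constant) model function $F_{\mathit{var}(a)}$ satisfies $a$, and (ii) for some $\sigma\in[D(\mathit{var}(\ell))]$ with $\sigma\models p|_U$, the value $F_{\mathit{var}(\ell)}(\sigma)$ satisfies $\neg\ell$.
   Context: For a set $V$ of variables, $[V]$ is the set of assignments $V\to\{\textsc{true},\textsc{false}\}$; assignments are identified with terms of the literals they make true, $\neg\sigma$ is the clause of the negations of these literals, and $\sigma|_W$ denotes restriction to (the part of the domain lying in) $W$. A DQBF is $\forall u_1\ldots\forall u_n\exists e_1(D_1)\ldots\exists e_m(D_m).\varphi$ with pairwise distinct variables, $U=\{u_i\}$, $E=\{e_j\}$, dependency sets $D(e_j)=D_j\subseteq U$, and $\varphi$ a CNF over $U\cup E$; a model is a family $F=(F_e)_{e}$ with $F_e:[D(e)]\to\{\textsc{true},\textsc{false}\}$ such that for every $\sigma\in[U]$, $\sigma\cup F(\sigma)$ satisfies the matrix, where $F(\sigma)$ assigns each existential $e$ the value $F_e(\sigma|_{D(e)})$. Arbiter variables are fresh variables $e^\sigma$ for $e\in E$, $\sigma\in[D(e)]$.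 For a set $A$ of them and a CNF $\psi$, $\mathcal{Q}\exists A(\emptyset).\psi$ is the DQBF whose prefix is that of $\Phi$ extended by every variable of $A$ as an existential variable with empty dependency set, and whose matrix is $\psi$. Forcing: let $\ell$ be a literal on a variable in $E$, $\psi$ a formula with $\mathit{var}(\psi)\subseteq U\cup E\cup A$, and $\sigma$ a partial assignment to $U\cup A$; $\ell$ is forced by $\sigma$ in $\psi$ if $\psi\wedge\sigma\wedge\neg\ell$ is unsatisfiable, and in that case $\neg(\sigma|_{D(\mathit{var}(\ell))\cup A})\vee\ell$ is called a forcing clause (for $\ell$ in $\psi$). *)

theory Defs
  imports Main
begin

datatype 'x lit = Pos 'x | Neg 'x

fun lit_var :: "'x lit \<Rightarrow> 'x" where
  "lit_var (Pos x) = x" | "lit_var (Neg x) = x"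

fun sat_lit :: "('x \<Rightarrow> bool) \<Rightarrow> 'x lit \<Rightarrow> bool" where
  "sat_lit \<alpha> (Pos x) = \<alpha> x" | "sat_lit \<alpha> (Neg x) = (\<not> \<alpha> x)"

type_synonym 'x clause = "'x lit set"
type_synonym 'x cnf = "'x clause set"

definition sat_cnf :: "('x \<Rightarrow> bool) \<Rightarrow> 'x cnf \<Rightarrow> bool" where
  "sat_cnf \<alpha> \<psi> \<longleftrightarrow> (\<forall>C\<in>\<psi>. \<exists>l\<in>C. sat_lit \<alpha> l)"

definition vars_cnf :: "'x cnf \<Rightarrow> 'x set" where
  "vars_cnf \<psi> = (\<Union>C\<in>\<psi>. lit_var ` C)"

definition is_cnf :: "'x cnf \<Rightarrow> bool" where
  "is_cnf \<psi> \<longleftrightarrow> finite \<psi> \<and> (\<forall>C\<in>\<psi>. finite C)"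

text \<open>(Partial) assignments to a set W are maps with domain W; [W] is the set
  of assignments with domain exactly W.\<close>
type_synonym 'x assign = "'x \<Rightarrow> bool option"

definition dqbf_prefix :: "'x set \<Rightarrow> 'x set \<Rightarrow> ('x \<Rightarrow> 'x set) \<Rightarrow> bool" where
  "dqbf_prefix U E D \<longleftrightarrow> finite U \<and> finite E \<and> U \<inter> E = {} \<and> (\<forall>e\<in>E. D e \<subseteq> U)"

definition dqbf :: "'x set \<Rightarrow> 'x set \<Rightarrow> ('x \<Rightarrow> 'x set) \<Rightarrow> 'x cnf \<Rightarrow> bool" where
  "dqbf U E D \<phi> \<longleftrightarrow> dqbf_prefix U E D \<and> is_cnf \<phi> \<and> vars_cnf \<phi> \<subseteq> U \<union> E"

text \<open>The total assignment sigma \<union> F(sigma) for sigma in [U]; variables outside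
  U \<union> E get an irrelevant default value.\<close>
definition extend_assign ::
  "'x set \<Rightarrow> 'x set \<Rightarrow> ('x \<Rightarrow> 'x set) \<Rightarrow> ('x \<Rightarrow> 'x assign \<Rightarrow> bool) \<Rightarrow> 'x assign \<Rightarrow> 'x \<Rightarrow> bool" where
  "extend_assign U E D F \<sigma> x =
     (if x \<in> U then the (\<sigma> x) else if x \<in> E then F x (\<sigma> |` D x) else False)"

text \<open>F is a model: a family of functions F e : [D e] \<rightarrow> bool (only applied to
  arguments in [D e]) such that every sigma in [U] extends to a satisfying
  assignment of the matrix.\<close>
definition is_model ::
  "'x set \<Rightarrow> 'x set \<Rightarrow> ('x \<Rightarrow> 'x set) \<Rightarrow> 'x cnf \<Rightarrow> ('x \<Rightarrow> 'x assign \<Rightarrow> bool) \<Rightarrow> bool" where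
  "is_model U E D \<psi> F \<longleftrightarrow> (\<forall>\<sigma>. dom \<sigma> = U \<longrightarrow> sat_cnf (extend_assign U E D F \<sigma>) \<psi>)"

text \<open>Variables of the extended formula: original variables and arbiter
  variables e^sigma (fresh by construction).\<close>
datatype 'v var = V 'v | Arb 'v "'v assign"

definition arbiter_vars :: "'v set \<Rightarrow> ('v \<Rightarrow> 'v set) \<Rightarrow> 'v var set" where
  "arbiter_vars E D = {Arb e \<sigma> | e \<sigma>. e \<in> E \<and> dom \<sigma> = D e}"

text \<open>Prefix of Q \<exists>A(\<emptyset>).psi : universals V`U, existentials V`E \<union> A,
  dependency sets V`(D e) for original existentials and \<emptyset> for arbiters.\<close>
definition extU :: "'v set \<Rightarrow> 'v var set" where
  "extU U = V ` U"

definition extE :: "'v set \<Rightarrow> 'v var set \<Rightarrow> 'v var set" where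
  "extE E A = V ` E \<union> A"

fun extD :: "('v \<Rightarrow> 'v set) \<Rightarrow> 'v var \<Rightarrow> 'v var set" where
  "extD D (V e) = V ` D e"
| "extD D (Arb e \<sigma>) = {}"

definition forced :: "'x cnf \<Rightarrow> 'x assign \<Rightarrow> 'x lit \<Rightarrow> bool" where
  "forced \<psi> \<sigma> l \<longleftrightarrow>
     \<not> (\<exists>\<alpha>. sat_cnf \<alpha> \<psi> \<and> (\<forall>x\<in>dom \<sigma>. \<sigma> x = Some (\<alpha> x)) \<and> \<not> sat_lit \<alpha> l)"

text \<open>\<not>p \<or> l is a forcing clause for l in psi (p is given as the partial
  assignment whose term it is): l is a literal on an existential variable,
  and p = sigma|_(D(var l) \<union> A) for some partial assignment sigma to U \<union> A
  forcing l in psi.\<close>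
definition forcing_clause ::
  "'v set \<Rightarrow> 'v set \<Rightarrow> ('v \<Rightarrow> 'v set) \<Rightarrow> 'v var set \<Rightarrow> 'v var cnf \<Rightarrow> 'v var assign \<Rightarrow> 'v var lit \<Rightarrow> bool" where
  "forcing_clause U E D A \<psi> p l \<longleftrightarrow>
     lit_var l \<in> V ` E \<and>
     (\<exists>\<sigma>. dom \<sigma> \<subseteq> extU U \<union> A \<and> forced \<psi> \<sigma> l \<and>
          p = \<sigma> |` (extD D (lit_var l) \<union> A))"

end

theory Submission
  imports Defs
begin

text \<open>Suppose F were such a model. Extend the assignment sigma of the dependency set of
  var l to a total universal assignment tau that agrees with p on the universals. By (i)
  the arbiters take their values from p, so sigma \<union> F(tau) is a satisfying assignment of
  psi that extends the forcing assignment behind p; hence it satisfies l. But it gives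
  var l the value F(sigma), which satisfies \<not>l by (ii).\<close>

lemma exists_map_extension:
  assumes "dom \<sigma> \<subseteq> W" and "\<forall>x\<in>dom \<sigma> \<inter> dom \<rho>. \<sigma> x = \<rho> x"
  obtains \<tau> where "dom \<tau> = W" and "\<tau> |` dom \<sigma> = \<sigma>" and "\<forall>x\<in>dom \<rho> \<inter> W. \<tau> x = \<rho> x"
proof
  define \<tau> where "\<tau> = (\<lambda>x. if x \<in> W then Some undefined else None) ++ (\<rho> |` W) ++ \<sigma>"
  show "dom \<tau> = W"
    using assms(1) unfolding \<tau>_def by (auto split: if_splits)
  show "\<tau> |` dom \<sigma> = \<sigma>"
    unfolding \<tau>_def restrict_map_def by (auto simp: map_add_def split: option.split)
  show "\<forall>x\<in>dom \<rho> \<inter> W. \<tau> x = \<rho> x"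
    using assms(2) unfolding \<tau>_def by (force simp: map_add_def split: option.split)
qed

lemma model_satisfies_forced_lit:
  assumes "is_model U E D \<psi> F" and "forced \<psi> \<rho> l" and "dom \<tau> = U"
    and "\<forall>x\<in>dom \<rho> \<inter> U. \<rho> x = \<tau> x"
    and "\<forall>x\<in>dom \<rho> - U. x \<in> E \<and> \<rho> x = Some (F x (\<tau> |` D x))"
    and "lit_var l \<in> E - U"
  shows "sat_lit (\<lambda>_. F (lit_var l) (\<tau> |` D (lit_var l))) l"
proof -
  let ?\<alpha> = "extend_assign U E D F \<tau>"
  have "sat_cnf ?\<alpha> \<psi>"
    using assms(1,3) unfolding is_model_def by blast
  moreover have "\<forall>x\<in>dom \<rho>. \<rho> x = Some (?\<alpha> x)"
  proof
    fix x assume "x \<in> dom \<rho>"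
    then show "\<rho> x = Some (?\<alpha> x)"
      using assms(3-5) unfolding extend_assign_def by (cases "x \<in> U") auto
  qed
  ultimately have "sat_lit ?\<alpha> l"
    using assms(2) unfolding forced_def by blast
  moreover have "?\<alpha> (lit_var l) = F (lit_var l) (\<tau> |` D (lit_var l))"
    using assms(6) unfolding extend_assign_def by simp
  ultimately show ?thesis
    by (cases l) simp_all
qed

lemma extD_arbiter: "a \<in> arbiter_vars E D \<Longrightarrow> extD D a = {}"
  unfolding arbiter_vars_def by auto

lemma arbiter_assignment_agrees_with_model:
  assumes "A \<subseteq> arbiter_vars E D" and "dom \<rho> \<subseteq> extU U \<union> A"
    and "\<forall>a\<in>dom \<rho> \<inter> A. F a Map.empty = the (\<rho> a)"
  shows "\<forall>x\<in>dom \<rho> - extU U. x \<in> extE E A \<and> \<rho> x = Some (F x (\<tau> |` extD D x))"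
proof
  fix a assume a: "a \<in> dom \<rho> - extU U"
  then have "a \<in> A"
    using assms(2) by blast
  moreover have "extD D a = {}"
    using extD_arbiter assms(1) \<open>a \<in> A\<close> by blast
  ultimately show "a \<in> extE E A \<and> \<rho> a = Some (F a (\<tau> |` extD D a))"
    using assms(3) a unfolding extE_def by auto
qed

lemma forced_lit_holds_in_arbiter_model:
  assumes "dqbf_prefix U E D" and "A \<subseteq> arbiter_vars E D"
    and model: "is_model (extU U) (extE E A) (extD D) \<psi> F"
    and "forcing_clause U E D A \<psi> p l"
    and arbiters_from_p: "\<forall>a\<in>dom p \<inter> A. F a Map.empty = the (p a)"
    and dom_\<sigma>: "dom \<sigma> = extD D (lit_var l)"
    and \<sigma>_agrees_p: "\<forall>x\<in>dom p \<inter> extU U. \<sigma> x = p x"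
  shows "sat_lit (\<lambda>_. F (lit_var l) \<sigma>) l"
proof -
  from assms(4) obtain e \<rho> where l_var: "lit_var l = V e" and "e \<in> E"
    and dom_\<rho>: "dom \<rho> \<subseteq> extU U \<union> A" and "forced \<psi> \<rho> l"
    and p_def: "p = \<rho> |` (extD D (lit_var l) \<union> A)"
    unfolding forcing_clause_def by blast
  have "D e \<subseteq> U" and "e \<notin> U"
    using assms(1) \<open>e \<in> E\<close> unfolding dqbf_prefix_def by auto
  then have "dom \<sigma> \<subseteq> extU U" and "V e \<in> extE E A - extU U"
    using \<open>e \<in> E\<close> dom_\<sigma> l_var unfolding extU_def extE_def by auto
  moreover have "\<forall>x\<in>dom \<sigma> \<inter> dom \<rho>. \<sigma> x = \<rho> x"
    using \<sigma>_agrees_p \<open>dom \<sigma> \<subseteq> extU U\<close> dom_\<sigma> p_def by auto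
  ultimately obtain \<tau> where dom_\<tau>: "dom \<tau> = extU U" and "\<tau> |` dom \<sigma> = \<sigma>"
    and \<tau>_agrees_\<rho>: "\<forall>x\<in>dom \<rho> \<inter> extU U. \<tau> x = \<rho> x"
    using exists_map_extension by blast
  have "\<forall>a\<in>dom \<rho> \<inter> A. F a Map.empty = the (\<rho> a)"
    using arbiters_from_p p_def by auto
  then have "\<forall>x\<in>dom \<rho> - extU U. x \<in> extE E A \<and> \<rho> x = Some (F x (\<tau> |` extD D x))"
    using arbiter_assignment_agrees_with_model assms(2) dom_\<rho> by blast
  then have "sat_lit (\<lambda>_. F (lit_var l) (\<tau> |` extD D (lit_var l))) l"
    using model_satisfies_forced_lit[OF model \<open>forced \<psi> \<rho> l\<close> dom_\<tau>] \<tau>_agrees_\<rho>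
      \<open>V e \<in> extE E A - extU U\<close> l_var by auto
  with \<open>\<tau> |` dom \<sigma> = \<sigma>\<close> dom_\<sigma> show ?thesis
    by simp
qed

theorem lemma8:
  fixes U E :: "'v set" and D :: "'v \<Rightarrow> 'v set" and \<phi> :: "'v cnf"
    and A :: "'v var set" and \<psi> :: "'v var cnf"
    and p :: "'v var assign" and l :: "'v var lit"
  assumes "dqbf U E D \<phi>"
    and "A \<subseteq> arbiter_vars E D"
    and "is_cnf \<psi>"
    and "vars_cnf \<psi> \<subseteq> extU U \<union> V ` E \<union> A"
    and "forcing_clause U E D A \<psi> p l"
  shows "\<not> (\<exists>F. is_model (extU U) (extE E A) (extD D) \<psi> F
              \<and> (\<forall>a\<in>dom p \<inter> A. F a Map.empty = the (p a))
              \<and> (\<exists>\<sigma>. dom \<sigma> = extD D (lit_var l)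
                     \<and> (\<forall>x\<in>dom p \<inter> extU U. \<sigma> x = p x)
                     \<and> \<not> sat_lit (\<lambda>_. F (lit_var l) \<sigma>) l))"
  using forced_lit_holds_in_arbiter_model[OF _ assms(2) _ assms(5)] assms(1)
  unfolding dqbf_def by blast

end
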